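(* Let $A,B,C$ be rooted trees, let $f\colon B\to A$ be a light confluent epimorphism and $g\colon C\to A$ a confluent epimorphism. Let $D$ be the graph with $V(D)=\{(b,c)\in V(B)\times V(C): f(b)=g(c)\}$ and $\langle (b,c),(b',c')\rangle\in E(D)$ iff $\langle b,b'\rangle\in E(B)$ and $\langle c,c'\rangle\in E(C)$, with root $(r_B,r_C)$, and let $f_0(b,c)=b$, $g_0(b,c)=c$. Then $D$ is a rooted tree, $f_0\colon D\to B$ is a confluent epimorphism and $g_0\colon D\to C$ is a light confluent epimorphism (of rooted trees), and $f\circ f_0=g\circ g_0$. Moreover, if $g$ is light then so is $f_0$, and if both $f$ and $g$ are end vertex preserving then so are $f_0$ and $g_0$.
   Context: A graph is a pair $(V,E)$ with $E\subseteq V^2$ reflexive and symmetric. A tree is a finite graph in which any two distinct vertices are joined by a unique sequence of pairwise distinct vertices with consecutive ones adjacent. A rooted tree is a tree $T$ with a distinguished vertex $r_T$ (the root); $x\le_T y$ means the path from $r_T$ to $y$ contains $x$. An epimorphism between rooted trees is a map on vertices sending edges to edges, surjective on vertices and on edges, sending root to root and order-preserving ($a\le b\Rightarrow f(a)\le f(b)$). A set $S$ of vertices is connected if it cannot be written as a union of two nonempty disjoint sets with no edge between them; components are maximal connected subsets. An epimorphism $f$ is confluent if for every connected $Q$ in the target and every component $K$ of $f^{-1}(Q)$, $f(K)=Q$; it is light if no two distinct vertices with the same image are joined by an edge. An end vertex of a rooted tree is a non-root vertex of order $1$ (order = number of non-degenerate edges containing it); an epimorphism is end vertex preserving if it maps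 end vertices to end vertices. *)

theory Defs
  imports Main
begin

definition graph :: "'a set \<Rightarrow> ('a \<times> 'a) set \<Rightarrow> bool" where
  "graph V E \<longleftrightarrow> E \<subseteq> V \<times> V \<and> (\<forall>v\<in>V. (v, v) \<in> E) \<and> (\<forall>x y. (x, y) \<in> E \<longrightarrow> (y, x) \<in> E)"

definition is_path :: "'a set \<Rightarrow> ('a \<times> 'a) set \<Rightarrow> 'a list \<Rightarrow> 'a \<Rightarrow> 'a \<Rightarrow> bool" where
  "is_path V E xs x y \<longleftrightarrow> xs \<noteq> [] \<and> hd xs = x \<and> last xs = y \<and> distinct xs \<and> set xs \<subseteq> V
     \<and> (\<forall>i. Suc i < length xs \<longrightarrow> (xs ! i, xs ! Suc i) \<in> E)"

definition tree :: "'a set \<Rightarrow> ('a \<times> 'a) set \<Rightarrow> bool" where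
  "tree V E \<longleftrightarrow> graph V E \<and> finite V \<and>
     (\<forall>x\<in>V. \<forall>y\<in>V. x \<noteq> y \<longrightarrow> (\<exists>!xs. is_path V E xs x y))"

definition rooted_tree :: "'a set \<Rightarrow> ('a \<times> 'a) set \<Rightarrow> 'a \<Rightarrow> bool" where
  "rooted_tree V E r \<longleftrightarrow> tree V E \<and> r \<in> V"

definition tree_le :: "'a set \<Rightarrow> ('a \<times> 'a) set \<Rightarrow> 'a \<Rightarrow> 'a \<Rightarrow> 'a \<Rightarrow> bool" where
  "tree_le V E r x y \<longleftrightarrow> (\<exists>xs. is_path V E xs r y \<and> x \<in> set xs)"

definition epimorphism ::
  "'a set \<Rightarrow> ('a \<times> 'a) set \<Rightarrow> 'a \<Rightarrow> 'b set \<Rightarrow> ('b \<times> 'b) set \<Rightarrow> 'b \<Rightarrow> ('a \<Rightarrow> 'b) \<Rightarrow> bool" where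
  "epimorphism V1 E1 r1 V2 E2 r2 f \<longleftrightarrow>
     f ` V1 = V2 \<and>
     (\<forall>a b. (a, b) \<in> E1 \<longrightarrow> (f a, f b) \<in> E2) \<and>
     (\<lambda>(a, b). (f a, f b)) ` E1 = E2 \<and>
     f r1 = r2 \<and>
     (\<forall>a\<in>V1. \<forall>b\<in>V1. tree_le V1 E1 r1 a b \<longrightarrow> tree_le V2 E2 r2 (f a) (f b))"

definition connected_set :: "('a \<times> 'a) set \<Rightarrow> 'a set \<Rightarrow> bool" where
  "connected_set E S \<longleftrightarrow> \<not> (\<exists>P Q. P \<noteq> {} \<and> Q \<noteq> {} \<and> P \<inter> Q = {} \<and> P \<union> Q = S \<and>
      (\<forall>p\<in>P. \<forall>q\<in>Q. (p, q) \<notin> E))"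

definition component_of :: "('a \<times> 'a) set \<Rightarrow> 'a set \<Rightarrow> 'a set \<Rightarrow> bool" where
  "component_of E S K \<longleftrightarrow> K \<subseteq> S \<and> connected_set E K \<and>
     (\<forall>K'. K \<subseteq> K' \<and> K' \<subseteq> S \<and> connected_set E K' \<longrightarrow> K' = K)"

definition confluent ::
  "'a set \<Rightarrow> ('a \<times> 'a) set \<Rightarrow> 'b set \<Rightarrow> ('b \<times> 'b) set \<Rightarrow> ('a \<Rightarrow> 'b) \<Rightarrow> bool" where
  "confluent V1 E1 V2 E2 f \<longleftrightarrow>
     (\<forall>Q. Q \<subseteq> V2 \<and> connected_set E2 Q \<longrightarrow>
        (\<forall>K. component_of E1 {v \<in> V1. f v \<in> Q} K \<longrightarrow> f ` K = Q))"

definition light :: "'a set \<Rightarrow> ('a \<times> 'a) set \<Rightarrow> ('a \<Rightarrow> 'b) \<Rightarrow> bool" where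
  "light V1 E1 f \<longleftrightarrow> (\<forall>a\<in>V1. \<forall>b\<in>V1. a \<noteq> b \<and> f a = f b \<longrightarrow> (a, b) \<notin> E1)"

definition vorder :: "'a set \<Rightarrow> ('a \<times> 'a) set \<Rightarrow> 'a \<Rightarrow> nat" where
  "vorder V E v = card {w \<in> V. w \<noteq> v \<and> (v, w) \<in> E}"

definition end_vertex :: "'a set \<Rightarrow> ('a \<times> 'a) set \<Rightarrow> 'a \<Rightarrow> 'a \<Rightarrow> bool" where
  "end_vertex V E r v \<longleftrightarrow> v \<in> V \<and> v \<noteq> r \<and> vorder V E v = 1"

definition end_vertex_preserving ::
  "'a set \<Rightarrow> ('a \<times> 'a) set \<Rightarrow> 'a \<Rightarrow> 'b set \<Rightarrow> ('b \<times> 'b) set \<Rightarrow> 'b \<Rightarrow> ('a \<Rightarrow> 'b) \<Rightarrow> bool" where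
  "end_vertex_preserving V1 E1 r1 V2 E2 r2 f \<longleftrightarrow>
     (\<forall>v. end_vertex V1 E1 r1 v \<longrightarrow> end_vertex V2 E2 r2 (f v))"

end

(*
  Rooted trees are handled through a parent function and a depth function: paths, the tree
  order and end vertices are all described by them, and every rooted tree carries one.

  In the fibre product D the parent of (b, c) lies over the parent of c; its first coordinate is
  b or the parent of b according as g collapses the edge from c to its parent or not. Since f is
  light, this is the only edge of D at (b, c) over that edge of C, so D is a rooted tree and both
  projections are epimorphisms. Confluence of a projection follows once edges lift to connected
  sets: an edge of C lifts along the light confluent map f to a single edge of D, and an edge of
  B lifts to the graph of a map on a component of a preimage under g. An end vertex of D has no
  children, and the same lifting shows that its coordinates have none either.
*)

theory Submission
  imports Defs
begin

section \<open>Paths in graphs\<close>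

lemma graph_edge_in: "graph V E \<Longrightarrow> (u, v) \<in> E \<Longrightarrow> u \<in> V \<and> v \<in> V"
  by (auto simp: graph_def)

lemma graph_edge_sym: "graph V E \<Longrightarrow> (u, v) \<in> E \<Longrightarrow> (v, u) \<in> E"
  by (auto simp: graph_def)

lemma graph_refl: "graph V E \<Longrightarrow> v \<in> V \<Longrightarrow> (v, v) \<in> E"
  by (auto simp: graph_def)

lemma is_path_iff_successively:
  "is_path V E xs x y \<longleftrightarrow> xs \<noteq> [] \<and> hd xs = x \<and> last xs = y \<and> distinct xs \<and> set xs \<subseteq> V
     \<and> successively (\<lambda>a b. (a, b) \<in> E) xs"
  unfolding is_path_def successively_conv_nth by blast

lemma walk_contains_path:
  assumes "successively R xs" "xs \<noteq> []"
  shows "\<exists>ys. ys \<noteq> [] \<and> hd ys = hd xs \<and> last ys = last xs \<and> distinct ys \<and> set ys \<subseteq> set xs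
     \<and> successively R ys"
  using assms
proof (induction xs)
  case Nil
  then show ?case by simp
next
  case (Cons x xs)
  show ?case
  proof (cases "xs = []")
    case True
    then show ?thesis by (intro exI[of _ "[x]"]) auto
  next
    case False
    then have walk: "successively R xs" "R x (hd xs)"
      using Cons.prems by (auto simp: successively_Cons)
    obtain ys where ys: "ys \<noteq> []" "hd ys = hd xs" "last ys = last xs" "distinct ys"
        "set ys \<subseteq> set xs" "successively R ys"
      using Cons.IH[OF walk(1) False] by blast
    show ?thesis
    proof (cases "x \<in> set ys")
      case True
      then obtain ys1 ys2 where split: "ys = ys1 @ x # ys2" by (meson split_list)
      then have "successively R (x # ys2)" "last (x # ys2) = last ys"
        using ys(6) by (auto simp: successively_append_iff)
      then show ?thesis using ys split False by (intro exI[of _ "x # ys2"]) auto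
    next
      case False
      then show ?thesis using ys walk \<open>xs \<noteq> []\<close>
        by (intro exI[of _ "x # ys"]) (auto simp: successively_Cons)
    qed
  qed
qed

section \<open>Rooted trees as parent structures\<close>

locale parent_structure =
  fixes V :: "'a set" and E :: "('a \<times> 'a) set" and r :: 'a
    and p :: "'a \<Rightarrow> 'a" and h :: "'a \<Rightarrow> nat"
  assumes is_graph: "graph V E"
    and finite_vertices: "finite V"
    and root_in: "r \<in> V"
    and height_root: "h r = 0"
    and parent_in: "x \<in> V \<Longrightarrow> x \<noteq> r \<Longrightarrow> p x \<in> V"
    and parent_edge: "x \<in> V \<Longrightarrow> x \<noteq> r \<Longrightarrow> (x, p x) \<in> E"
    and height_parent: "x \<in> V \<Longrightarrow> x \<noteq> r \<Longrightarrow> Suc (h (p x)) = h x"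
    and edge_cases: "(u, v) \<in> E \<Longrightarrow> u = v \<or> (u \<noteq> r \<and> v = p u) \<or> (v \<noteq> r \<and> u = p v)"
begin

lemma height_zero_imp_root: "x \<in> V \<Longrightarrow> h x = 0 \<Longrightarrow> x = r"
  using height_parent by fastforce

lemma parent_neq: "x \<in> V \<Longrightarrow> x \<noteq> r \<Longrightarrow> p x \<noteq> x"
  using height_parent by fastforce

lemma iterated_parent:
  assumes x: "x \<in> V"
  shows "j \<le> h x \<Longrightarrow> (p ^^ j) x \<in> V \<and> h ((p ^^ j) x) = h x - j"
proof (induction j)
  case 0
  then show ?case using x by simp
next
  case (Suc j)
  then have IH: "(p ^^ j) x \<in> V" "h ((p ^^ j) x) = h x - j" by auto
  with Suc.prems height_root have "(p ^^ j) x \<noteq> r" by auto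
  with IH show ?case using parent_in height_parent by force
qed

text \<open>Once a path steps down to a child it never steps up again, since that would revisit
  the vertex it came from.\<close>

lemma path_peak:
  assumes "is_path V E xs x y"
  obtains m where "m < length xs"
    and "\<And>i. i < m \<Longrightarrow> xs ! i \<noteq> r \<and> xs ! Suc i = p (xs ! i)"
    and "\<And>k. m \<le> k \<Longrightarrow> Suc k < length xs \<Longrightarrow> xs ! Suc k \<noteq> r \<and> xs ! k = p (xs ! Suc k)"
proof -
  define n where "n = length xs"
  have dist: "distinct xs" and n0: "n > 0" and adj: "\<And>i. Suc i < n \<Longrightarrow> (xs ! i, xs ! Suc i) \<in> E"
    using assms unfolding is_path_def n_def by auto
  define up where "up i \<longleftrightarrow> xs ! i \<noteq> r \<and> xs ! Suc i = p (xs ! i)" for i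
  define down where "down i \<longleftrightarrow> xs ! Suc i \<noteq> r \<and> xs ! i = p (xs ! Suc i)" for i
  have up_or_down: "up i \<or> down i" if "Suc i < n" for i
  proof -
    have "xs ! i \<noteq> xs ! Suc i" using dist that n_def by (simp add: nth_eq_iff_index_eq)
    then show ?thesis using edge_cases[OF adj[OF that]] unfolding up_def down_def by auto
  qed
  have down_Suc: "down (Suc i)" if "down i" "Suc (Suc i) < n" for i
  proof (rule ccontr)
    assume "\<not> down (Suc i)"
    then have "up (Suc i)" using up_or_down[OF that(2)] by blast
    then have "xs ! Suc (Suc i) = xs ! i" using that(1) unfolding up_def down_def by simp
    then show False using dist that(2) n_def by (simp add: nth_eq_iff_index_eq)
  qed
  have down_from: "down (i + k)" if "down i" "Suc (i + k) < n" for i k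
    using that(2) by (induction k) (use that(1) down_Suc in auto)
  show ?thesis
  proof (cases "\<exists>i. Suc i < n \<and> down i")
    case True
    define m where "m = (LEAST i. Suc i < n \<and> down i)"
    have m: "Suc m < n" "down m" using LeastI_ex[OF True] unfolding m_def by auto
    have "up i" if "i < m" for i
      using not_less_Least[OF that[unfolded m_def]] up_or_down[of i] m(1) that by linarith
    moreover have "down k" if "m \<le> k" "Suc k < n" for k
      using down_from[OF m(2), of "k - m"] that by simp
    ultimately show ?thesis
      using that[of m] m(1) unfolding up_def down_def n_def by auto
  next
    case False
    then have "up i" if "i < n - 1" for i using up_or_down[of i] that by auto
    then show ?thesis using that[of "n - 1"] n0 unfolding up_def n_def by auto
  qed
qed

definition peak_at :: "'a list \<Rightarrow> 'a \<Rightarrow> 'a \<Rightarrow> nat \<Rightarrow> bool" where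
  "peak_at xs x y m \<longleftrightarrow> m < length xs \<and> (\<forall>i\<le>m. xs ! i = (p ^^ i) x)
     \<and> (\<forall>d. m + d < length xs \<longrightarrow> xs ! (length xs - 1 - d) = (p ^^ d) y)
     \<and> h x = h (xs ! m) + m \<and> h y = h (xs ! m) + (length xs - 1 - m)"

lemma path_has_peak:
  assumes P: "is_path V E xs x y"
  shows "\<exists>m. peak_at xs x y m"
proof -
  define n where "n = length xs"
  have ne: "xs \<noteq> []" and hd: "hd xs = x" and lst: "last xs = y" and inV: "\<And>i. i < n \<Longrightarrow> xs ! i \<in> V"
    using P nth_mem unfolding is_path_def n_def by auto
  obtain m where m: "m < n"
    and up: "\<And>i. i < m \<Longrightarrow> xs ! i \<noteq> r \<and> xs ! Suc i = p (xs ! i)"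
    and down: "\<And>k. m \<le> k \<Longrightarrow> Suc k < n \<Longrightarrow> xs ! Suc k \<noteq> r \<and> xs ! k = p (xs ! Suc k)"
    using path_peak[OF P] unfolding n_def by metis
  have climb: "xs ! i = (p ^^ i) x \<and> h x = h (xs ! i) + i" if "i \<le> m" for i
    using that
  proof (induction i)
    case 0
    then show ?case using hd ne by (simp add: hd_conv_nth)
  next
    case (Suc i)
    then show ?case using up[of i] height_parent[OF inV, of i] m by auto
  qed
  have descend: "xs ! (n - 1 - d) = (p ^^ d) y \<and> h y = h (xs ! (n - 1 - d)) + d" if "m + d < n" for d
    using that
  proof (induction d)
    case 0
    then show ?case using lst ne n_def by (simp add: last_conv_nth)
  next
    case (Suc d)
    define k where "k = n - 1 - Suc d"
    have k: "Suc k = n - 1 - d" "m \<le> k" "Suc k < n" using Suc.prems unfolding k_def by auto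
    then show ?case
      using Suc down[OF k(2,3)] height_parent[OF inV[OF k(3)]] unfolding k_def[symmetric] by auto
  qed
  have top: "n - 1 - (n - 1 - m) = m" using m by simp
  from descend[of "n - 1 - m", unfolded top] m have "h y = h (xs ! m) + (n - 1 - m)" by simp
  then have "peak_at xs x y m"
    unfolding peak_at_def n_def[symmetric] using m climb descend by blast
  then show ?thesis ..
qed

text \<open>If the second path climbed higher than the first, it would pass twice through the peak of
  the first.\<close>

lemma peak_at_unique:
  assumes xs: "peak_at xs x y m" and ys: "peak_at ys x y m'"
    and dist: "distinct ys" and le: "m \<le> m'"
  shows "m = m' \<and> length xs = length ys"
proof -
  define b where "b = length xs - 1 - m"
  define b' where "b' = length ys - 1 - m'"
  have len: "m < length xs" "m' < length ys" using xs ys unfolding peak_at_def by auto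
  have top: "(p ^^ m) x = (p ^^ b) y"
  proof -
    have "m + b < length xs" "length xs - 1 - b = m" using len b_def by auto
    then have "xs ! m = (p ^^ b) y" using xs unfolding peak_at_def by metis
    moreover have "xs ! m = (p ^^ m) x" using xs unfolding peak_at_def by simp
    ultimately show ?thesis by simp
  qed
  have heights: "h x = h (xs ! m) + m" "h y = h (xs ! m) + b" "h x = h (ys ! m') + m'" "h y = h (ys ! m') + b'"
    using xs ys unfolding peak_at_def b_def b'_def by auto
  then have "b \<le> b'" using le by linarith
  have "m = m'"
  proof (rule ccontr)
    assume "m \<noteq> m'"
    with le have lt: "m < m'" by simp
    have "ys ! m = (p ^^ m) x" "ys ! (length ys - 1 - b) = (p ^^ b) y"
      using ys lt \<open>b \<le> b'\<close> len unfolding peak_at_def b'_def by auto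
    then have "ys ! m = ys ! (length ys - 1 - b)" using top by simp
    then have "m = length ys - 1 - b" using dist len lt by (simp add: nth_eq_iff_index_eq)
    then show False using lt \<open>b \<le> b'\<close> len unfolding b'_def by linarith
  qed
  then show ?thesis using heights len unfolding b_def b'_def by linarith
qed

lemma path_unique:
  assumes xs: "is_path V E xs x y" and ys: "is_path V E ys x y"
  shows "xs = ys"
proof -
  obtain m m' where m: "peak_at xs x y m" and m': "peak_at ys x y m'"
    using path_has_peak[OF xs] path_has_peak[OF ys] by blast
  have dist: "distinct xs" "distinct ys" using xs ys by (simp_all add: is_path_def)
  have eq: "m = m' \<and> length xs = length ys"
  proof (cases "m \<le> m'")
    case True
    then show ?thesis using peak_at_unique[OF m m' dist(2)] by blast
  next
    case False
    then show ?thesis using peak_at_unique[OF m' m dist(1)] by simp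
  qed
  show ?thesis
  proof (rule nth_equalityI)
    show "length xs = length ys" using eq by simp
  next
    fix i assume i: "i < length xs"
    show "xs ! i = ys ! i"
    proof (cases "i \<le> m")
      case True
      then show ?thesis using m m' eq unfolding peak_at_def by simp
    next
      case False
      define d where "d = length xs - 1 - i"
      have "i = length xs - 1 - d" "m + d < length xs" using False i d_def by auto
      then show ?thesis using m m' eq unfolding peak_at_def by metis
    qed
  qed
qed

lemma path_from_root:
  assumes y: "y \<in> V"
  shows "is_path V E (rev (map (\<lambda>j. (p ^^ j) y) [0..<Suc (h y)])) r y"
proof -
  have anc: "(p ^^ j) y \<in> V \<and> h ((p ^^ j) y) = h y - j" if "j \<le> h y" for j
    using iterated_parent[OF y that] .
  have "inj_on (\<lambda>j. (p ^^ j) y) {0..<Suc (h y)}"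
  proof (rule inj_onI)
    fix i j assume "i \<in> {0..<Suc (h y)}" "j \<in> {0..<Suc (h y)}" "(p ^^ i) y = (p ^^ j) y"
    then show "i = j" using anc[of i] anc[of j] by auto
  qed
  then have "distinct (map (\<lambda>j. (p ^^ j) y) [0..<Suc (h y)])"
    by (simp add: distinct_map del: upt_Suc)
  moreover have "(p ^^ h y) y = r" using anc[of "h y"] height_zero_imp_root by simp
  moreover have "(p ((p ^^ j) y), (p ^^ j) y) \<in> E" if "j < h y" for j
  proof -
    have "(p ^^ j) y \<in> V" "(p ^^ j) y \<noteq> r" using anc[of j] that height_root by auto
    then show ?thesis using parent_edge graph_edge_sym[OF is_graph] by blast
  qed
  moreover have "successively (\<lambda>a b. (b, a) \<in> E) (map (\<lambda>j. (p ^^ j) y) [0..<Suc (h y)])"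
    using calculation(3) unfolding successively_conv_nth by (simp del: upt_Suc)
  ultimately show ?thesis
    unfolding is_path_iff_successively using anc
    by (auto simp: hd_rev last_rev hd_map last_map simp del: upt_Suc)
qed

lemma path_exists:
  assumes x: "x \<in> V" and y: "y \<in> V"
  shows "\<exists>zs. is_path V E zs x y"
proof -
  obtain xs ys where xs: "is_path V E xs r x" and ys: "is_path V E ys r y"
    using path_from_root x y by blast
  have "successively (\<lambda>a b. (a, b) \<in> E) (rev xs)"
    using xs graph_edge_sym[OF is_graph] by (auto simp: is_path_iff_successively elim: successively_mono)
  then have walk: "successively (\<lambda>a b. (a, b) \<in> E) (rev xs @ ys)"
    using xs ys graph_refl[OF is_graph root_in]
    by (auto simp: is_path_iff_successively successively_append_iff last_rev)
  obtain zs where "zs \<noteq> []" "hd zs = x" "last zs = y" "distinct zs" "set zs \<subseteq> V"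
      "successively (\<lambda>a b. (a, b) \<in> E) zs"
    using walk_contains_path[OF walk] xs ys by (force simp: is_path_iff_successively hd_rev)
  then show ?thesis unfolding is_path_iff_successively by blast
qed

lemma is_rooted_tree: "rooted_tree V E r"
  unfolding rooted_tree_def tree_def
  using is_graph finite_vertices root_in path_exists path_unique by blast

lemma tree_le_iff:
  assumes "y \<in> V"
  shows "tree_le V E r x y \<longleftrightarrow> (\<exists>j\<le>h y. x = (p ^^ j) y)"
proof -
  have "tree_le V E r x y \<longleftrightarrow> x \<in> set (rev (map (\<lambda>j. (p ^^ j) y) [0..<Suc (h y)]))"
    using path_from_root[OF assms] path_unique unfolding tree_le_def by blast
  then show ?thesis by (auto simp: less_Suc_eq_le simp del: upt_Suc)
qed

lemma end_vertex_iff: "end_vertex V E r v \<longleftrightarrow> v \<in> V \<and> v \<noteq> r \<and> (\<forall>w\<in>V. w \<noteq> r \<longrightarrow> p w \<noteq> v)"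
proof (cases "v \<in> V \<and> v \<noteq> r")
  case True
  then have v: "v \<in> V" "v \<noteq> r" by auto
  let ?children = "{w \<in> V. w \<noteq> r \<and> p w = v}"
  have neighbours: "{w \<in> V. w \<noteq> v \<and> (v, w) \<in> E} = insert (p v) ?children"
  proof (intro equalityI subsetI)
    fix w assume "w \<in> {w \<in> V. w \<noteq> v \<and> (v, w) \<in> E}"
    then show "w \<in> insert (p v) ?children" using edge_cases[of v w] by auto
  next
    fix w assume "w \<in> insert (p v) ?children"
    then consider "w = p v" | "w \<in> V" "w \<noteq> r" "p w = v" by blast
    then show "w \<in> {w \<in> V. w \<noteq> v \<and> (v, w) \<in> E}"
    proof cases
      case 1
      then show ?thesis using v parent_in parent_edge parent_neq by auto
    next
      case 2
      then show ?thesis using parent_edge[of w] parent_neq[of w] graph_edge_sym[OF is_graph] by auto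
    qed
  qed
  have "p v \<notin> ?children"
  proof
    assume "p v \<in> ?children"
    then have "p v \<in> V" "p v \<noteq> r" "p (p v) = v" by auto
    then have "Suc (h v) = h (p v)" using height_parent[of "p v"] by simp
    with height_parent[OF v] show False by simp
  qed
  moreover have "finite ?children" using finite_vertices by simp
  ultimately have "card (insert (p v) ?children) = Suc (card ?children)"
    "card ?children = 0 \<longleftrightarrow> ?children = {}"
    by simp_all
  then show ?thesis unfolding end_vertex_def vorder_def neighbours using v by auto
qed (auto simp: end_vertex_def)

end

definition root_path :: "'a set \<Rightarrow> ('a \<times> 'a) set \<Rightarrow> 'a \<Rightarrow> 'a \<Rightarrow> 'a list" where
  "root_path V E r y = (THE xs. is_path V E xs r y)"

definition tree_parent :: "'a set \<Rightarrow> ('a \<times> 'a) set \<Rightarrow> 'a \<Rightarrow> 'a \<Rightarrow> 'a" where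
  "tree_parent V E r y = last (butlast (root_path V E r y))"

definition tree_depth :: "'a set \<Rightarrow> ('a \<times> 'a) set \<Rightarrow> 'a \<Rightarrow> 'a \<Rightarrow> nat" where
  "tree_depth V E r y = length (root_path V E r y) - 1"

lemma rooted_tree_graph: "rooted_tree V E r \<Longrightarrow> graph V E"
  by (simp add: rooted_tree_def tree_def)

lemma is_path_last_in: "is_path V E xs x y \<Longrightarrow> y \<in> V"
  unfolding is_path_def using last_in_set by blast

lemma rooted_tree_ex1_root_path:
  assumes T: "rooted_tree V E r" and y: "y \<in> V"
  shows "\<exists>!xs. is_path V E xs r y"
proof (cases "y = r")
  case True
  show ?thesis
  proof (rule ex1I)
    show "is_path V E [r] r y" using True y by (simp add: is_path_def)
  next
    fix xs assume P: "is_path V E xs r y"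
    then have ne: "xs \<noteq> []" and hd: "hd xs = r" and dist: "distinct xs" and last: "last xs = r"
      using True by (simp_all add: is_path_def)
    show "xs = [r]"
    proof (cases "tl xs = []")
      case True
      then show ?thesis using ne hd by (cases xs) simp_all
    next
      case False
      then have "last xs \<in> set (tl xs)" "hd xs \<notin> set (tl xs)"
        using ne dist by (cases xs; simp)+
      then show ?thesis using hd last by simp
    qed
  qed
next
  case False
  have "r \<in> V" "\<forall>x\<in>V. \<forall>y\<in>V. x \<noteq> y \<longrightarrow> (\<exists>!xs. is_path V E xs x y)"
    using T by (simp_all add: rooted_tree_def tree_def)
  from this(2)[rule_format, OF this(1) y] False show ?thesis by simp
qed

lemma is_path_root_path: "rooted_tree V E r \<Longrightarrow> y \<in> V \<Longrightarrow> is_path V E (root_path V E r y) r y"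
  unfolding root_path_def by (rule theI'[OF rooted_tree_ex1_root_path])

lemma root_path_eqI:
  assumes "rooted_tree V E r" "is_path V E xs r y"
  shows "root_path V E r y = xs"
  unfolding root_path_def
  using the1_equality[OF rooted_tree_ex1_root_path[OF assms(1) is_path_last_in[OF assms(2)]] assms(2)] .

lemma root_path_root: "rooted_tree V E r \<Longrightarrow> root_path V E r r = [r]"
  by (rule root_path_eqI) (simp_all add: is_path_def rooted_tree_def)

lemma root_path_parent:
  assumes T: "rooted_tree V E r" and x: "x \<in> V" "x \<noteq> r"
  shows "root_path V E r x = root_path V E r (tree_parent V E r x) @ [x]"
    and "tree_parent V E r x \<in> V" and "(x, tree_parent V E r x) \<in> E"
proof -
  let ?P = "root_path V E r x"
  have P: "?P \<noteq> []" "hd ?P = r" "last ?P = x" "distinct ?P" "set ?P \<subseteq> V"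
    "successively (\<lambda>a b. (a, b) \<in> E) ?P"
    using is_path_root_path[OF T x(1)] by (auto simp: is_path_iff_successively)
  define B where "B = butlast ?P"
  have PB: "?P = B @ [x]" using P(1,3) unfolding B_def by (metis append_butlast_last_id)
  have "B \<noteq> []" using PB P(2) x(2) by auto
  then have B: "is_path V E B r (last B)" and "(last B, x) \<in> E"
    using P PB by (auto simp: is_path_iff_successively successively_append_iff)
  moreover have "tree_parent V E r x = last B" unfolding tree_parent_def B_def ..
  ultimately show "?P = root_path V E r (tree_parent V E r x) @ [x]" "tree_parent V E r x \<in> V"
    "(x, tree_parent V E r x) \<in> E"
    using PB root_path_eqI[OF T B] graph_edge_sym[OF rooted_tree_graph[OF T]] is_path_last_in[OF B]
    by auto
qed

text \<open>Otherwise \<open>ys @ [v, u]\<close> would be a second path from the root to \<open>u\<close>.\<close>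

lemma root_path_adjacent:
  assumes T: "rooted_tree V E r" and u: "u \<in> V" and P: "root_path V E r u = ys @ v # zs"
    and vu: "(v, u) \<in> E" and "v \<noteq> u"
  shows "zs = [u]"
proof (rule ccontr)
  assume ne: "zs \<noteq> [u]"
  have path: "ys @ v # zs \<noteq> []" "hd (ys @ v # zs) = r" "last (ys @ v # zs) = u"
    "distinct (ys @ v # zs)" "set (ys @ v # zs) \<subseteq> V" "successively (\<lambda>a b. (a, b) \<in> E) (ys @ v # zs)"
    using is_path_root_path[OF T u] unfolding P is_path_iff_successively by simp_all
  then have "zs \<noteq> []" using \<open>v \<noteq> u\<close> by auto
  then have "u \<in> set zs" using path(3) last_in_set by fastforce
  then have "distinct (ys @ [v, u])" using path(4) ne by auto
  moreover have "successively (\<lambda>a b. (a, b) \<in> E) (ys @ [v, u])"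
    using path(6) vu by (simp add: successively_append_iff successively_Cons)
  moreover have "hd (ys @ [v, u]) = r" using path(2) by (cases ys) simp_all
  moreover have "set (ys @ [v, u]) \<subseteq> V" using path(5) u by auto
  ultimately have "is_path V E (ys @ [v, u]) r u" unfolding is_path_iff_successively by simp
  then have "ys @ v # zs = ys @ [v, u]" using root_path_eqI[OF T] P by metis
  then show False using ne by simp
qed

lemma rooted_tree_edge_cases:
  assumes T: "rooted_tree V E r" and uv: "(u, v) \<in> E"
  shows "u = v \<or> (u \<noteq> r \<and> v = tree_parent V E r u) \<or> (v \<noteq> r \<and> u = tree_parent V E r v)"
proof (rule ccontr)
  assume neg: "\<not> ?thesis"
  have g: "graph V E" using rooted_tree_graph[OF T] .
  have uV: "u \<in> V" and vV: "v \<in> V" using graph_edge_in[OF g uv] by auto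
  let ?P = "root_path V E r u"
  have P: "?P \<noteq> []" "hd ?P = r" "last ?P = u" "set ?P \<subseteq> V" "successively (\<lambda>a b. (a, b) \<in> E) ?P"
    using is_path_root_path[OF T uV] by (auto simp: is_path_iff_successively)
  show False
  proof (cases "v \<in> set ?P")
    case False
    then have "is_path V E (?P @ [v]) r v"
      using P vV uv is_path_root_path[OF T uV]
      by (auto simp: is_path_iff_successively successively_append_iff)
    then have "root_path V E r v = ?P @ [v]" by (rule root_path_eqI[OF T])
    moreover have "v \<noteq> r" using False P(1,2) hd_in_set by metis
    ultimately show False using neg P(3) by (simp add: tree_parent_def)
  next
    case True
    then obtain ys zs where split: "?P = ys @ v # zs" by (meson split_list)
    have "u \<noteq> v" using neg by auto
    then have "zs = [u]" using root_path_adjacent[OF T uV split graph_edge_sym[OF g uv]] by simp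
    moreover have "u \<noteq> r" using split root_path_root[OF T] \<open>zs = [u]\<close> by auto
    ultimately show False using neg split by (simp add: tree_parent_def butlast_append)
  qed
qed

lemma rooted_tree_parent_structure:
  assumes T: "rooted_tree V E r"
  shows "parent_structure V E r (tree_parent V E r) (tree_depth V E r)"
proof
  show "graph V E" "finite V" "r \<in> V" using T unfolding rooted_tree_def tree_def by simp_all
  show "tree_depth V E r r = 0" by (simp add: tree_depth_def root_path_root[OF T])
  fix x assume x: "x \<in> V" "x \<noteq> r"
  show "tree_parent V E r x \<in> V" "(x, tree_parent V E r x) \<in> E"
    using root_path_parent[OF T x] by auto
  have "root_path V E r (tree_parent V E r x) \<noteq> []"
    using is_path_root_path[OF T root_path_parent(2)[OF T x]] by (simp add: is_path_def)
  then show "Suc (tree_depth V E r (tree_parent V E r x)) = tree_depth V E r x"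
    unfolding tree_depth_def root_path_parent(1)[OF T x] by simp
next
  fix u v assume "(u, v) \<in> E"
  then show "u = v \<or> (u \<noteq> r \<and> v = tree_parent V E r u) \<or> (v \<noteq> r \<and> u = tree_parent V E r v)"
    by (rule rooted_tree_edge_cases[OF T])
qed

section \<open>Connected sets and components\<close>

lemma connected_setI:
  assumes "\<And>P Q. P \<noteq> {} \<Longrightarrow> Q \<noteq> {} \<Longrightarrow> P \<inter> Q = {} \<Longrightarrow> P \<union> Q = K \<Longrightarrow>
      \<forall>p\<in>P. \<forall>q\<in>Q. (p, q) \<notin> E \<Longrightarrow> False"
  shows "connected_set E K"
  unfolding connected_set_def
proof (intro notI, elim exE conjE)
  fix P Q assume "P \<noteq> {}" "Q \<noteq> {}" "P \<inter> Q = {}" "P \<union> Q = K" "\<forall>p\<in>P. \<forall>q\<in>Q. (p, q) \<notin> E"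
  then show False by (rule assms)
qed

lemma connected_setD:
  assumes "connected_set E K" "P \<noteq> {}" "Q \<noteq> {}" "P \<inter> Q = {}" "P \<union> Q = K"
    "\<forall>p\<in>P. \<forall>q\<in>Q. (p, q) \<notin> E"
  shows False
proof -
  have "\<exists>P Q. P \<noteq> {} \<and> Q \<noteq> {} \<and> P \<inter> Q = {} \<and> P \<union> Q = K \<and> (\<forall>p\<in>P. \<forall>q\<in>Q. (p, q) \<notin> E)"
    by (intro exI[of _ P] exI[of _ Q] conjI) (fact assms)+
  then show False using assms(1) unfolding connected_set_def by (elim notE)
qed

lemma connected_set_subset_Un:
  assumes K: "connected_set E K" and "K \<subseteq> P \<union> Q" "P \<inter> Q = {}" "\<forall>p\<in>P. \<forall>q\<in>Q. (p, q) \<notin> E"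
  shows "K \<subseteq> P \<or> K \<subseteq> Q"
proof (rule ccontr)
  assume "\<not> ?thesis"
  then have "P \<inter> K \<noteq> {}" "Q \<inter> K \<noteq> {}" using assms(2) by auto
  moreover have "(P \<inter> K) \<inter> (Q \<inter> K) = {}" using assms(3) by auto
  moreover have "(P \<inter> K) \<union> (Q \<inter> K) = K" using assms(2) by auto
  moreover have "\<forall>p\<in>P \<inter> K. \<forall>q\<in>Q \<inter> K. (p, q) \<notin> E" using assms(4) by auto
  ultimately show False by (rule connected_setD[OF K])
qed

lemma connected_set_boundary_edge:
  assumes "connected_set E Q" "A \<subseteq> Q" "A \<noteq> {}" "A \<noteq> Q"
  shows "\<exists>a\<in>A. \<exists>q\<in>Q - A. (a, q) \<in> E"
proof (rule ccontr)
  assume no_edge: "\<not> ?thesis"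
  have "Q - A \<noteq> {}" using assms(2,4) by blast
  moreover have "A \<inter> (Q - A) = {}" "A \<union> (Q - A) = Q" using assms(2) by auto
  moreover have "\<forall>a\<in>A. \<forall>q\<in>Q - A. (a, q) \<notin> E" using no_edge by blast
  ultimately show False by (rule connected_setD[OF assms(1,3)])
qed

lemma connected_set_edge:
  assumes "(a, b) \<in> E" "(b, a) \<in> E"
  shows "connected_set E {a, b}"
proof (rule connected_setI)
  fix P Q assume PQ: "P \<noteq> {}" "Q \<noteq> {}" "P \<inter> Q = {}" "P \<union> Q = {a, b}" "\<forall>p\<in>P. \<forall>q\<in>Q. (p, q) \<notin> E"
  obtain p q where pq: "p \<in> P" "q \<in> Q" using PQ(1,2) by blast
  then have "p \<noteq> q" "p \<in> {a, b}" "q \<in> {a, b}" using PQ(3,4) by auto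
  then have "(p, q) \<in> E" using assms by auto
  then show False using PQ(5) pq by blast
qed

lemma connected_set_singleton: "connected_set E {a}"
proof (rule connected_setI)
  fix P Q assume PQ: "P \<noteq> {}" "Q \<noteq> {}" "P \<inter> Q = {}" "P \<union> Q = {a}"
  obtain p q where "p \<in> P" "q \<in> Q" using PQ(1,2) by blast
  then have "p = a" "q = a" using PQ(4) by auto
  then show False using PQ(3) \<open>p \<in> P\<close> \<open>q \<in> Q\<close> by blast
qed

lemma connected_set_Un:
  assumes K: "connected_set E K" and L: "connected_set E L" and KL: "K \<inter> L \<noteq> {}"
  shows "connected_set E (K \<union> L)"
proof (rule connected_setI)
  fix P Q assume PQ: "P \<noteq> {}" "Q \<noteq> {}" "P \<inter> Q = {}" "P \<union> Q = K \<union> L" "\<forall>p\<in>P. \<forall>q\<in>Q. (p, q) \<notin> E"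
  have "K \<subseteq> P \<union> Q" "L \<subseteq> P \<union> Q" using PQ(4) by auto
  then have K_side: "K \<subseteq> P \<or> K \<subseteq> Q" and L_side: "L \<subseteq> P \<or> L \<subseteq> Q"
    using connected_set_subset_Un[OF K _ PQ(3,5)] connected_set_subset_Un[OF L _ PQ(3,5)] by simp_all
  obtain x where "x \<in> K" "x \<in> L" using KL by blast
  then have "K \<union> L \<subseteq> P \<or> K \<union> L \<subseteq> Q" using K_side L_side PQ(3) by blast
  then show False using PQ(1-4) by blast
qed

lemma connected_set_image:
  assumes S: "connected_set E1 S" and F: "\<forall>x\<in>S. \<forall>y\<in>S. (x, y) \<in> E1 \<longrightarrow> (F x, F y) \<in> E2"
  shows "connected_set E2 (F ` S)"
proof (rule connected_setI)
  fix P Q assume PQ: "P \<noteq> {}" "Q \<noteq> {}" "P \<inter> Q = {}" "P \<union> Q = F ` S" "\<forall>p\<in>P. \<forall>q\<in>Q. (p, q) \<notin> E2"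
  have "S \<subseteq> {x \<in> S. F x \<in> P} \<union> {x \<in> S. F x \<in> Q}" using PQ(4) by blast
  moreover have "{x \<in> S. F x \<in> P} \<inter> {x \<in> S. F x \<in> Q} = {}" using PQ(3) by blast
  moreover have "\<forall>x\<in>{x \<in> S. F x \<in> P}. \<forall>y\<in>{x \<in> S. F x \<in> Q}. (x, y) \<notin> E1" using PQ(5) F by blast
  ultimately have "S \<subseteq> {x \<in> S. F x \<in> P} \<or> S \<subseteq> {x \<in> S. F x \<in> Q}"
    by (rule connected_set_subset_Un[OF S])
  then have "F ` S \<subseteq> P \<or> F ` S \<subseteq> Q" by blast
  then show False using PQ(1-4) by blast
qed

lemma exists_component:
  assumes "finite S" "s \<in> S"
  obtains K where "component_of E S K" "s \<in> K"
proof -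
  define C where "C = {K. K \<subseteq> S \<and> connected_set E K \<and> s \<in> K}"
  have "C \<subseteq> Pow S" unfolding C_def by blast
  then have "finite C" using assms(1) finite_subset by blast
  moreover have "{s} \<in> C" using assms(2) connected_set_singleton unfolding C_def by simp
  ultimately obtain K where K: "K \<in> C" and max: "\<And>K'. K' \<in> C \<Longrightarrow> K \<subseteq> K' \<Longrightarrow> K = K'"
    using finite_has_maximal[of C] by blast
  have "component_of E S K" unfolding component_of_def
  proof (intro conjI allI impI)
    show "K \<subseteq> S" "connected_set E K" using K unfolding C_def by simp_all
    fix K' assume "K \<subseteq> K' \<and> K' \<subseteq> S \<and> connected_set E K'"
    then show "K' = K" using max[of K'] K unfolding C_def by blast
  qed
  then show thesis using that K unfolding C_def by blast
qed

lemma component_ofD: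
  assumes "component_of E S K"
  shows "K \<subseteq> S" "connected_set E K" "\<And>K'. K \<subseteq> K' \<Longrightarrow> K' \<subseteq> S \<Longrightarrow> connected_set E K' \<Longrightarrow> K' = K"
  using assms unfolding component_of_def by auto

lemma component_of_absorb:
  assumes K: "component_of E S K" and L: "connected_set E L" "L \<subseteq> S" and KL: "K \<inter> L \<noteq> {}"
  shows "L \<subseteq> K"
proof -
  have "connected_set E (K \<union> L)" by (rule connected_set_Un[OF component_ofD(2)[OF K] L(1) KL])
  then have "K \<union> L = K" using component_ofD(1,3)[OF K] L(2) by simp
  then show ?thesis by blast
qed

lemma component_of_nonempty:
  assumes K: "component_of E S K" and s: "s \<in> S"
  shows "K \<noteq> {}"
proof
  assume "K = {}"
  then have "{s} = K" using component_ofD(3)[OF K, of "{s}"] s connected_set_singleton[of E s] by simp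
  with \<open>K = {}\<close> show False by simp
qed

text \<open>A map is confluent as soon as every edge at an image point \<open>F v\<close> lifts to a connected set
  through \<open>v\<close> mapping onto that edge: a component of a preimage that missed part of \<open>Q\<close> would
  then absorb the lift of an edge leaving its image.\<close>

lemma confluentI_edge_lifting:
  assumes surj: "F ` V1 = V2"
    and lift: "\<And>v w. v \<in> V1 \<Longrightarrow> (F v, w) \<in> E2 \<Longrightarrow>
       \<exists>L. L \<subseteq> V1 \<and> connected_set E1 L \<and> v \<in> L \<and> F ` L \<subseteq> {F v, w} \<and> w \<in> F ` L"
  shows "confluent V1 E1 V2 E2 F"
  unfolding confluent_def
proof (intro allI impI)
  fix Q K assume Q: "Q \<subseteq> V2 \<and> connected_set E2 Q" and K: "component_of E1 {v \<in> V1. F v \<in> Q} K"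
  have KV: "K \<subseteq> {v \<in> V1. F v \<in> Q}" by (rule component_ofD(1)[OF K])
  show "F ` K = Q"
  proof (rule ccontr)
    assume ne: "F ` K \<noteq> Q"
    have FK: "F ` K \<subseteq> Q" using KV by blast
    obtain q0 where "q0 \<in> Q" using FK ne by blast
    then obtain v0 where v0: "v0 \<in> V1" "F v0 = q0" using Q surj by blast
    have "F ` K \<noteq> {}" using component_of_nonempty[OF K, of v0] v0 \<open>q0 \<in> Q\<close> by simp
    then obtain a q where aq: "a \<in> F ` K" "q \<in> Q - F ` K" "(a, q) \<in> E2"
      using connected_set_boundary_edge[OF conjunct2[OF Q] FK _ ne] by blast
    then obtain v where v: "v \<in> K" "a = F v" by blast
    have vV: "v \<in> V1" using KV v(1) by blast
    from lift[OF vV aq(3)[unfolded v(2)]] obtain L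
      where L: "L \<subseteq> V1" "connected_set E1 L" "v \<in> L" "F ` L \<subseteq> {F v, q}" "q \<in> F ` L"
      by blast
    have "F v \<in> Q" using FK v(1) by blast
    have "L \<subseteq> {v \<in> V1. F v \<in> Q}"
    proof
      fix x assume "x \<in> L"
      then have "x \<in> V1" "F x \<in> {F v, q}" using L(1,4) by auto
      then show "x \<in> {v \<in> V1. F v \<in> Q}" using \<open>F v \<in> Q\<close> aq(2) by auto
    qed
    moreover have "K \<inter> L \<noteq> {}" using L(3) v(1) by blast
    ultimately have "L \<subseteq> K" by (rule component_of_absorb[OF K L(2)])
    then have "q \<in> F ` K" using L(5) by blast
    then show False using aq(2) by simp
  qed
qed

section \<open>Maps between rooted trees\<close>

lemma epimorphismD:
  assumes "epimorphism V1 E1 r1 V2 E2 r2 F"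
  shows "F ` V1 = V2" "(a, b) \<in> E1 \<Longrightarrow> (F a, F b) \<in> E2" "(\<lambda>(a, b). (F a, F b)) ` E1 = E2"
    "F r1 = r2" "a \<in> V1 \<Longrightarrow> b \<in> V1 \<Longrightarrow> tree_le V1 E1 r1 a b \<Longrightarrow> tree_le V2 E2 r2 (F a) (F b)"
  using assms unfolding epimorphism_def by blast+

lemma epimorphismI:
  assumes "F ` V1 = V2" "\<And>a b. (a, b) \<in> E1 \<Longrightarrow> (F a, F b) \<in> E2" "(\<lambda>(a, b). (F a, F b)) ` E1 = E2"
    "F r1 = r2" "\<And>a b. a \<in> V1 \<Longrightarrow> b \<in> V1 \<Longrightarrow> tree_le V1 E1 r1 a b \<Longrightarrow> tree_le V2 E2 r2 (F a) (F b)"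
  shows "epimorphism V1 E1 r1 V2 E2 r2 F"
  using assms unfolding epimorphism_def by blast

lemma lightD: "light V E F \<Longrightarrow> a \<in> V \<Longrightarrow> b \<in> V \<Longrightarrow> (a, b) \<in> E \<Longrightarrow> a \<noteq> b \<Longrightarrow> F a \<noteq> F b"
  unfolding light_def by blast

text \<open>The edge from \<open>b\<close> to its parent is mapped onto an edge, and order preservation puts the
  image of the parent below \<open>F b\<close>, so it cannot be a child of \<open>F b\<close>.\<close>

lemma epimorphism_parent_cases:
  assumes S1: "parent_structure V1 E1 r1 p1 h1" and S2: "parent_structure V2 E2 r2 p2 h2"
    and F: "epimorphism V1 E1 r1 V2 E2 r2 F" and b: "b \<in> V1" "b \<noteq> r1"
  shows "F (p1 b) = F b \<or> (F b \<noteq> r2 \<and> F (p1 b) = p2 (F b))"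
proof -
  interpret S1: parent_structure V1 E1 r1 p1 h1 by (fact S1)
  interpret S2: parent_structure V2 E2 r2 p2 h2 by (fact S2)
  have pb: "p1 b \<in> V1" "(b, p1 b) \<in> E1" using S1.parent_in S1.parent_edge b by auto
  have FV: "F b \<in> V2" "F (p1 b) \<in> V2" and edge: "(F b, F (p1 b)) \<in> E2"
    using epimorphismD(1,2)[OF F] pb b by auto
  have "1 \<le> h1 b" using S1.height_parent[OF b] by simp
  then have "\<exists>j\<le>h1 b. p1 b = (p1 ^^ j) b" by (intro exI[of _ 1]) simp
  then have "tree_le V1 E1 r1 (p1 b) b" using S1.tree_le_iff[OF b(1)] by simp
  then have "tree_le V2 E2 r2 (F (p1 b)) (F b)" using epimorphismD(5)[OF F pb(1) b(1)] by blast
  then obtain j where "j \<le> h2 (F b)" "F (p1 b) = (p2 ^^ j) (F b)" using S2.tree_le_iff[OF FV(1)] by blast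
  then have "h2 (F (p1 b)) \<le> h2 (F b)" using S2.iterated_parent[OF FV(1)] by simp
  then show ?thesis using S2.edge_cases[OF edge] S2.height_parent[OF FV(2)] by auto
qed

lemma light_epimorphism_parent:
  assumes S1: "parent_structure V1 E1 r1 p1 h1" and S2: "parent_structure V2 E2 r2 p2 h2"
    and F: "epimorphism V1 E1 r1 V2 E2 r2 F" and L: "light V1 E1 F" and b: "b \<in> V1" "b \<noteq> r1"
  shows "F b \<noteq> r2 \<and> F (p1 b) = p2 (F b)"
proof -
  have "p1 b \<in> V1" "(b, p1 b) \<in> E1" "p1 b \<noteq> b"
    using parent_structure.parent_in[OF S1 b] parent_structure.parent_edge[OF S1 b]
      parent_structure.parent_neq[OF S1 b] by auto
  then have "F (p1 b) \<noteq> F b" using lightD[OF L] b(1) by metis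
  then show ?thesis using epimorphism_parent_cases[OF S1 S2 F b] by blast
qed

lemma tree_le_preserved:
  assumes S1: "parent_structure V1 E1 r1 p1 h1" and S2: "parent_structure V2 E2 r2 p2 h2"
    and FV: "\<And>x. x \<in> V1 \<Longrightarrow> F x \<in> V2"
    and steps: "\<And>b. b \<in> V1 \<Longrightarrow> b \<noteq> r1 \<Longrightarrow> F (p1 b) = F b \<or> (F b \<noteq> r2 \<and> F (p1 b) = p2 (F b))"
    and b: "b \<in> V1" and le: "tree_le V1 E1 r1 a b"
  shows "tree_le V2 E2 r2 (F a) (F b)"
proof -
  interpret S1: parent_structure V1 E1 r1 p1 h1 by (fact S1)
  interpret S2: parent_structure V2 E2 r2 p2 h2 by (fact S2)
  obtain j where j: "j \<le> h1 b" "a = (p1 ^^ j) b" using S1.tree_le_iff[OF b] le by blast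
  have "\<exists>k\<le>h2 (F b). F ((p1 ^^ j) b) = (p2 ^^ k) (F b)"
    using j(1)
  proof (induction j)
    case 0
    then show ?case by auto
  next
    case (Suc j)
    then obtain k where k: "k \<le> h2 (F b)" "F ((p1 ^^ j) b) = (p2 ^^ k) (F b)" by auto
    let ?z = "(p1 ^^ j) b"
    have z: "?z \<in> V1" "?z \<noteq> r1" using S1.iterated_parent[OF b, of j] Suc.prems S1.height_root by auto
    have hz: "h2 (F ?z) = h2 (F b) - k" using S2.iterated_parent[OF FV[OF b] k(1)] k(2) by simp
    from steps[OF z] show ?case
    proof
      assume "F (p1 ?z) = F ?z"
      then show ?case using k by auto
    next
      assume up: "F ?z \<noteq> r2 \<and> F (p1 ?z) = p2 (F ?z)"
      then have "h2 (F ?z) \<noteq> 0" using S2.height_zero_imp_root[OF FV[OF z(1)]] by blast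
      then have "Suc k \<le> h2 (F b)" using hz by simp
      then show ?case using up k by (intro exI[of _ "Suc k"]) auto
    qed
  qed
  then show ?thesis using S2.tree_le_iff[OF FV[OF b]] j(2) by blast
qed

lemma confluentD:
  assumes "confluent V1 E1 V2 E2 F" "Q \<subseteq> V2" "connected_set E2 Q"
    "component_of E1 {v \<in> V1. F v \<in> Q} K"
  shows "F ` K = Q"
  using assms(1)[unfolded confluent_def, rule_format, OF conjI[OF assms(2,3)] assms(4)] .

lemma light_confluent_lift_edge:
  assumes g1: "graph V1 E1" and fin: "finite V1" and g2: "graph V2 E2"
    and L: "light V1 E1 F" and C: "confluent V1 E1 V2 E2 F"
    and b: "b \<in> V1" and e: "(F b, a) \<in> E2"
  shows "\<exists>b'\<in>V1. (b, b') \<in> E1 \<and> F b' = a"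
proof (cases "a = F b")
  case True
  then show ?thesis using b graph_refl[OF g1 b] by blast
next
  case False
  let ?S = "{v \<in> V1. F v \<in> {F b, a}}"
  have Q: "{F b, a} \<subseteq> V2" "connected_set E2 {F b, a}"
    using graph_edge_in[OF g2 e] connected_set_edge[OF e graph_edge_sym[OF g2 e]] by auto
  have "finite ?S" "b \<in> ?S" using fin b by simp_all
  then obtain K where K: "component_of E1 ?S K" "b \<in> K" by (rule exists_component)
  have "F ` K = {F b, a}" by (rule confluentD[OF C Q K(1)])
  then have "{b} \<noteq> K" using False by auto
  moreover have "{b} \<subseteq> K" using K(2) by simp
  ultimately obtain q where q: "q \<in> K - {b}" "(b, q) \<in> E1"
    using connected_set_boundary_edge[OF component_ofD(2)[OF K(1)]] by blast
  then have "q \<in> V1" "F q \<in> {F b, a}" using component_ofD(1)[OF K(1)] by auto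
  moreover have "F q \<noteq> F b" using lightD[OF L b \<open>q \<in> V1\<close> q(2)] q(1) by auto
  ultimately show ?thesis using q by auto
qed

section \<open>The fibre product\<close>

locale pullback =
  A: parent_structure VA EA rA pA hA + B: parent_structure VB EB rB pB hB
  + C: parent_structure VC EC rC pC hC
  for VA :: "'a set" and EA rA pA hA and VB :: "'b set" and EB rB pB hB
    and VC :: "'c set" and EC rC pC hC +
  fixes f :: "'b \<Rightarrow> 'a" and g :: "'c \<Rightarrow> 'a"
  assumes f_epi: "epimorphism VB EB rB VA EA rA f" and f_light: "light VB EB f"
    and g_epi: "epimorphism VC EC rC VA EA rA g"
begin

definition VD :: "('b \<times> 'c) set" where
  "VD = {(b, c). b \<in> VB \<and> c \<in> VC \<and> f b = g c}"

definition ED :: "(('b \<times> 'c) \<times> ('b \<times> 'c)) set" where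
  "ED = {((b, c), (b', c')). b \<in> VB \<and> c \<in> VC \<and> f b = g c \<and> b' \<in> VB \<and> c' \<in> VC \<and> f b' = g c'
     \<and> (b, b') \<in> EB \<and> (c, c') \<in> EC}"

definition rD :: "'b \<times> 'c" where
  "rD = (rB, rC)"

text \<open>When \<open>g\<close> does not collapse the edge from \<open>c\<close> to its parent, the light map \<open>f\<close> sends the edge
  from \<open>b\<close> to its parent onto the same edge of \<open>A\<close>, so both coordinates move up.\<close>

definition pD :: "'b \<times> 'c \<Rightarrow> 'b \<times> 'c" where
  "pD = (\<lambda>(b, c). if g (pC c) = g c then (b, pC c) else (pB b, pC c))"

definition hD :: "'b \<times> 'c \<Rightarrow> nat" where
  "hD = (\<lambda>(b, c). hC c)"

lemma mem_VD [simp]: "(b, c) \<in> VD \<longleftrightarrow> b \<in> VB \<and> c \<in> VC \<and> f b = g c"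
  by (simp add: VD_def)

lemma mem_ED [simp]:
  "((b, c), (b', c')) \<in> ED \<longleftrightarrow> (b, c) \<in> VD \<and> (b', c') \<in> VD \<and> (b, b') \<in> EB \<and> (c, c') \<in> EC"
  by (auto simp: ED_def)

lemma f_in: "b \<in> VB \<Longrightarrow> f b \<in> VA"
  using epimorphismD(1)[OF f_epi] by blast

lemma g_in: "c \<in> VC \<Longrightarrow> g c \<in> VA"
  using epimorphismD(1)[OF g_epi] by blast

lemma f_root: "f rB = rA"
  by (rule epimorphismD(4)[OF f_epi])

lemma g_root: "g rC = rA"
  by (rule epimorphismD(4)[OF g_epi])

lemma f_parent: "b \<in> VB \<Longrightarrow> b \<noteq> rB \<Longrightarrow> f b \<noteq> rA \<and> f (pB b) = pA (f b)"
  using light_epimorphism_parent[OF B.parent_structure_axioms A.parent_structure_axioms f_epi f_light] .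

lemma g_parent: "c \<in> VC \<Longrightarrow> c \<noteq> rC \<Longrightarrow> g (pC c) = g c \<or> (g c \<noteq> rA \<and> g (pC c) = pA (g c))"
  using epimorphism_parent_cases[OF C.parent_structure_axioms A.parent_structure_axioms g_epi] .

lemma f_edge_eq: "(b, b') \<in> EB \<Longrightarrow> f b = f b' \<Longrightarrow> b = b'"
  using lightD[OF f_light] graph_edge_in[OF B.is_graph] by blast

lemma root_in_VD: "rD \<in> VD"
  using B.root_in C.root_in f_root g_root by (simp add: rD_def)

lemma snd_neq_root: "(b, c) \<in> VD \<Longrightarrow> (b, c) \<noteq> rD \<Longrightarrow> c \<noteq> rC"
  using f_parent g_root by (auto simp: rD_def)

lemma parent_in_VD:
  assumes x: "(b, c) \<in> VD" "(b, c) \<noteq> rD"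
  shows "pD (b, c) \<in> VD \<and> ((b, c), pD (b, c)) \<in> ED"
proof -
  have bc: "b \<in> VB" "c \<in> VC" "f b = g c" and c: "c \<noteq> rC" using x snd_neq_root by auto
  have pc: "pC c \<in> VC" "(c, pC c) \<in> EC" using C.parent_in C.parent_edge bc(2) c by auto
  show ?thesis
  proof (cases "g (pC c) = g c")
    case True
    then show ?thesis using bc pc graph_refl[OF B.is_graph] by (simp add: pD_def)
  next
    case False
    then have gc: "g c \<noteq> rA" "g (pC c) = pA (g c)" using g_parent[OF bc(2) c] by auto
    then have b: "b \<noteq> rB" using bc(3) f_root by auto
    then have "f (pB b) = g (pC c)" using f_parent[OF bc(1)] gc bc(3) by simp
    then show ?thesis using False bc pc b B.parent_in B.parent_edge by (simp add: pD_def)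
  qed
qed

text \<open>Otherwise \<open>b'\<close> would be a child of \<open>b\<close>, and \<open>f\<close>, being light, would make \<open>g c\<close> the parent
  of \<open>g (pC c)\<close>, which is itself the parent of \<open>g c\<close>.\<close>

lemma edge_over_parent:
  assumes x: "(b, c) \<in> VD" "(b', pC c) \<in> VD" and e: "(b, b') \<in> EB" and c: "c \<noteq> rC"
  shows "(b', pC c) = pD (b, c)"
proof (cases "g (pC c) = g c")
  case True
  then have "b = b'" using f_edge_eq[OF e] x by simp
  then show ?thesis using True by (simp add: pD_def)
next
  case False
  have bc: "b \<in> VB" "c \<in> VC" "f b = g c" "b' \<in> VB" "f b' = g (pC c)" using x by auto
  have gc: "g c \<noteq> rA" "g (pC c) = pA (g c)" using g_parent[OF bc(2) c] False by auto
  from B.edge_cases[OF e] consider "b = b'" | "b \<noteq> rB" "b' = pB b" | "b' \<noteq> rB" "b = pB b'"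
    by blast
  then show ?thesis
  proof cases
    case 1
    then show ?thesis using bc False by simp
  next
    case 2
    then show ?thesis using False by (simp add: pD_def)
  next
    case 3
    then have "pA (g (pC c)) = g c" using f_parent[OF bc(4)] bc by simp
    then have "Suc (hA (g c)) = hA (g (pC c))"
      using A.height_parent[OF g_in[OF C.parent_in[OF bc(2) c]]] f_parent[OF bc(4) 3(1)] bc by simp
    then show ?thesis using A.height_parent[OF g_in[OF bc(2)] gc(1)] gc(2) by simp
  qed
qed

lemma parent_structure_D: "parent_structure VD ED rD pD hD"
proof
  show "graph VD ED"
    using graph_refl[OF B.is_graph] graph_refl[OF C.is_graph]
      graph_edge_sym[OF B.is_graph] graph_edge_sym[OF C.is_graph]
    by (auto simp: graph_def ED_def VD_def)
  have "VD \<subseteq> VB \<times> VC" by (auto simp: VD_def)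
  then show "finite VD" using B.finite_vertices C.finite_vertices finite_subset by blast
  show "rD \<in> VD" by (rule root_in_VD)
  show "hD rD = 0" using C.height_root by (simp add: hD_def rD_def)
next
  fix x assume x: "x \<in> VD" "x \<noteq> rD"
  obtain b c where bc: "x = (b, c)" by (cases x)
  show "pD x \<in> VD" "(x, pD x) \<in> ED" using parent_in_VD x bc by auto
  show "Suc (hD (pD x)) = hD x"
    using C.height_parent snd_neq_root x bc by (auto simp: pD_def hD_def)
next
  fix u v assume uv: "(u, v) \<in> ED"
  obtain b c b' c' where uv_def: "u = (b, c)" "v = (b', c')" by (cases u, cases v)
  then have m: "(b, c) \<in> VD" "(b', c') \<in> VD" "(b, b') \<in> EB" "(c, c') \<in> EC" using uv by auto
  from C.edge_cases[OF m(4)]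
  show "u = v \<or> (u \<noteq> rD \<and> v = pD u) \<or> (v \<noteq> rD \<and> u = pD v)"
  proof (elim disjE conjE)
    assume "c = c'"
    then show ?thesis using f_edge_eq[OF m(3)] m uv_def by simp
  next
    assume "c \<noteq> rC" "c' = pC c"
    then show ?thesis using edge_over_parent[OF m(1) _ m(3)] m(2) uv_def by (simp add: rD_def)
  next
    assume "c' \<noteq> rC" "c = pC c'"
    then show ?thesis
      using edge_over_parent[OF m(2) _ graph_edge_sym[OF B.is_graph m(3)]] m(1) uv_def by (simp add: rD_def)
  qed
qed

lemma fst_parent:
  assumes x: "x \<in> VD" "x \<noteq> rD"
  shows "fst (pD x) = fst x \<or> (fst x \<noteq> rB \<and> fst (pD x) = pB (fst x))"
proof -
  obtain b c where bc: "x = (b, c)" by (cases x)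
  show ?thesis
  proof (cases "g (pC c) = g c")
    case True
    then show ?thesis using bc by (simp add: pD_def)
  next
    case False
    have c: "c \<in> VC" "c \<noteq> rC" and "f b = g c" using x bc snd_neq_root by auto
    moreover have "g c \<noteq> rA" using False g_parent[OF c] by auto
    ultimately have "b \<noteq> rB" using f_root by auto
    then show ?thesis using False bc by (simp add: pD_def)
  qed
qed

lemma snd_parent: "x \<in> VD \<Longrightarrow> x \<noteq> rD \<Longrightarrow> snd x \<noteq> rC \<and> snd (pD x) = pC (snd x)"
  using snd_neq_root by (cases x) (simp add: pD_def)

lemma fst_in: "x \<in> VD \<Longrightarrow> fst x \<in> VB"
  by (auto simp: VD_def)

lemma snd_in: "x \<in> VD \<Longrightarrow> snd x \<in> VC"
  by (auto simp: VD_def)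

lemma fst_image: "fst ` VD = VB"
proof
  show "fst ` VD \<subseteq> VB" using fst_in by blast
  show "VB \<subseteq> fst ` VD"
  proof
    fix b assume b: "b \<in> VB"
    obtain c where "c \<in> VC" "f b = g c"
      using f_in[OF b] epimorphismD(1)[OF g_epi] by blast
    then show "b \<in> fst ` VD" using b by (intro image_eqI[where x="(b, c)"]) simp_all
  qed
qed

lemma fst_edge_image: "(\<lambda>(x, y). (fst x, fst y)) ` ED = EB"
proof
  show "(\<lambda>(x, y). (fst x, fst y)) ` ED \<subseteq> EB" by (auto simp: ED_def)
  show "EB \<subseteq> (\<lambda>(x, y). (fst x, fst y)) ` ED"
  proof (clarify)
    fix b b' assume e: "(b, b') \<in> EB"
    have "(f b, f b') \<in> (\<lambda>(c, c'). (g c, g c')) ` EC"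
      using epimorphismD(2)[OF f_epi e] epimorphismD(3)[OF g_epi] by simp
    then obtain c c' where c: "(c, c') \<in> EC" "f b = g c" "f b' = g c'" by auto
    then have "((b, c), (b', c')) \<in> ED"
      using e graph_edge_in[OF B.is_graph e] graph_edge_in[OF C.is_graph c(1)] by simp
    then show "(b, b') \<in> (\<lambda>(x, y). (fst x, fst y)) ` ED"
      by (intro image_eqI[where x="((b, c), (b', c'))"]) simp_all
  qed
qed

lemma fst_epimorphism: "epimorphism VD ED rD VB EB rB fst"
proof (rule epimorphismI[OF fst_image _ fst_edge_image])
  show "(fst x, fst y) \<in> EB" if "(x, y) \<in> ED" for x y using that by (auto simp: ED_def)
  show "fst rD = rB" by (simp add: rD_def)
  show "tree_le VB EB rB (fst x) (fst y)" if "x \<in> VD" "y \<in> VD" "tree_le VD ED rD x y" for x y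
    by (rule tree_le_preserved[where F=fst, OF parent_structure_D B.parent_structure_axioms fst_in
          fst_parent that(2,3)])
qed

lemma ex_pair_over_snd: "c \<in> VC \<Longrightarrow> \<exists>b. (b, c) \<in> VD"
  using g_in epimorphismD(1)[OF f_epi] by force

lemma snd_image: "snd ` VD = VC"
proof
  show "snd ` VD \<subseteq> VC" using snd_in by blast
  show "VC \<subseteq> snd ` VD"
  proof
    fix c assume "c \<in> VC"
    then obtain b where "(b, c) \<in> VD" using ex_pair_over_snd by blast
    then show "c \<in> snd ` VD" by (intro image_eqI[where x="(b, c)"]) simp_all
  qed
qed

lemma snd_light: "light VD ED snd"
  unfolding light_def
proof (intro ballI impI)
  fix x y assume "x \<in> VD" "y \<in> VD" "x \<noteq> y \<and> snd x = snd y"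
  then show "(x, y) \<notin> ED" using f_edge_eq by (cases x, cases y) auto
qed

lemma fst_light:
  assumes "light VC EC g"
  shows "light VD ED fst"
  unfolding light_def
proof (intro ballI impI)
  fix x y assume xy: "x \<in> VD" "y \<in> VD" "x \<noteq> y \<and> fst x = fst y"
  obtain b c b' c' where bc: "x = (b, c)" "y = (b', c')" by (cases x, cases y)
  show "(x, y) \<notin> ED"
  proof
    assume "(x, y) \<in> ED"
    then have "c \<in> VC" "c' \<in> VC" "(c, c') \<in> EC" "c \<noteq> c'" "g c = g c'" using xy bc by auto
    then show False using lightD[OF assms] by blast
  qed
qed

lemma g_component_over_edge:
  assumes g_conf: "confluent VC EC VA EA g" and c: "c \<in> VC" and e: "(g c, a) \<in> EA"
  obtains K where "connected_set EC K" "c \<in> K" "K \<subseteq> VC" "g ` K = {g c, a}"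
proof -
  let ?S = "{c' \<in> VC. g c' \<in> {g c, a}}"
  have Q: "{g c, a} \<subseteq> VA" "connected_set EA {g c, a}"
    using graph_edge_in[OF A.is_graph e] connected_set_edge[OF e graph_edge_sym[OF A.is_graph e]] by auto
  have "finite ?S" "c \<in> ?S" using C.finite_vertices c by simp_all
  then obtain K where K: "component_of EC ?S K" "c \<in> K" by (rule exists_component)
  then have "connected_set EC K" "K \<subseteq> VC" using component_ofD[OF K(1)] by auto
  moreover have "g ` K = {g c, a}" by (rule confluentD[OF g_conf Q K(1)])
  ultimately show thesis using that K(2) by blast
qed

text \<open>An edge from \<open>b\<close> to \<open>w\<close> lifts to the graph of a map on a component of the preimage under
  \<open>g\<close> of the edge from \<open>f b\<close> to \<open>f w\<close>: send \<open>c'\<close> to \<open>b\<close> or to \<open>w\<close>, whichever lies over \<open>g c'\<close>.\<close>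

lemma fst_lift_edge:
  assumes g_conf: "confluent VC EC VA EA g" and v: "(b, c) \<in> VD" and e: "(b, w) \<in> EB"
  shows "\<exists>L. L \<subseteq> VD \<and> connected_set ED L \<and> (b, c) \<in> L \<and> fst ` L \<subseteq> {b, w} \<and> w \<in> fst ` L"
proof -
  have bc: "b \<in> VB" "c \<in> VC" "f b = g c" using v by auto
  have w: "w \<in> VB" using graph_edge_in[OF B.is_graph e] by simp
  have "(g c, f w) \<in> EA" using epimorphismD(2)[OF f_epi e] bc(3) by simp
  then obtain K where Kc: "connected_set EC K" and K: "c \<in> K" and KS: "K \<subseteq> VC"
    and gK: "g ` K = {g c, f w}"
    by (rule g_component_over_edge[OF g_conf bc(2)])
  define \<phi> where "\<phi> c' = (if g c' = f b then b else w)" for c'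
  have \<phi>c: "\<phi> c = b" using bc by (simp add: \<phi>_def)
  have \<phi>: "(\<phi> c', c') \<in> VD" "\<phi> c' \<in> {b, w}" if "c' \<in> K" for c'
  proof -
    have "c' \<in> VC" "g c' = f b \<or> g c' = f w" using KS gK bc(3) that by auto
    then show "(\<phi> c', c') \<in> VD" "\<phi> c' \<in> {b, w}" using bc(1) w unfolding \<phi>_def by auto
  qed
  have "(\<phi> c1, \<phi> c2) \<in> EB" if "c1 \<in> K" "c2 \<in> K" for c1 c2
    using \<phi>(2)[OF that(1)] \<phi>(2)[OF that(2)] e graph_edge_sym[OF B.is_graph e]
      graph_refl[OF B.is_graph bc(1)] graph_refl[OF B.is_graph w]
    by auto
  then have "\<forall>x\<in>K. \<forall>y\<in>K. (x, y) \<in> EC \<longrightarrow> ((\<phi> x, x), (\<phi> y, y)) \<in> ED" using \<phi>(1) by simp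
  then have conn: "connected_set ED ((\<lambda>c'. (\<phi> c', c')) ` K)" by (rule connected_set_image[OF Kc])
  have "w \<in> \<phi> ` K"
  proof (cases "f w = f b")
    case True
    then have "w = \<phi> c" using f_edge_eq[OF e] \<phi>c by simp
    then show ?thesis using K by (rule image_eqI)
  next
    case False
    have "f w \<in> g ` K" using gK by simp
    then obtain c' where "c' \<in> K" "g c' = f w" by auto
    then show ?thesis using False by (intro image_eqI[where x=c']) (simp_all add: \<phi>_def)
  qed
  moreover have "fst ` ((\<lambda>c'. (\<phi> c', c')) ` K) = \<phi> ` K" by (simp add: image_image)
  moreover have "(b, c) \<in> (\<lambda>c'. (\<phi> c', c')) ` K" using K \<phi>c by (intro image_eqI[where x=c]) simp_all
  moreover have "(\<lambda>c'. (\<phi> c', c')) ` K \<subseteq> VD" using \<phi>(1) by blast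
  moreover have "\<phi> ` K \<subseteq> {b, w}" using \<phi>(2) by blast
  ultimately show ?thesis using conn by (intro exI[of _ "(\<lambda>c'. (\<phi> c', c')) ` K"]) simp
qed

lemma fst_confluent:
  assumes "confluent VC EC VA EA g"
  shows "confluent VD ED VB EB fst"
proof (rule confluentI_edge_lifting)
  show "fst ` VD = VB" by (rule fst_image)
  fix v w assume v: "v \<in> VD" and e: "(fst v, w) \<in> EB"
  obtain b c where bc: "v = (b, c)" by (cases v)
  show "\<exists>L. L \<subseteq> VD \<and> connected_set ED L \<and> v \<in> L \<and> fst ` L \<subseteq> {fst v, w} \<and> w \<in> fst ` L"
    using fst_lift_edge[OF assms, of b c w] v e bc by simp
qed

end

locale pullback_light_confluent = pullback +
  assumes f_conf: "confluent VB EB VA EA f"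
begin

lemma f_lift_edge: "b \<in> VB \<Longrightarrow> (f b, a) \<in> EA \<Longrightarrow> \<exists>b'\<in>VB. (b, b') \<in> EB \<and> f b' = a"
  by (rule light_confluent_lift_edge[OF B.is_graph B.finite_vertices A.is_graph f_light f_conf])

lemma snd_lift_edge:
  assumes v: "(b, c) \<in> VD" and e: "(c, w) \<in> EC"
  obtains b' where "((b, c), (b', w)) \<in> ED"
proof -
  have bc: "b \<in> VB" "f b = g c" using v by auto
  have "(f b, g w) \<in> EA" using epimorphismD(2)[OF g_epi e] bc(2) by simp
  then obtain b' where "b' \<in> VB" "(b, b') \<in> EB" "f b' = g w" using f_lift_edge[OF bc(1)] by blast
  moreover have "w \<in> VC" using graph_edge_in[OF C.is_graph e] by simp
  ultimately have "((b, c), (b', w)) \<in> ED" using v e by simp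
  then show thesis by (rule that)
qed

lemma snd_edge_image: "(\<lambda>(x, y). (snd x, snd y)) ` ED = EC"
proof
  show "(\<lambda>(x, y). (snd x, snd y)) ` ED \<subseteq> EC" by (auto simp: ED_def)
  show "EC \<subseteq> (\<lambda>(x, y). (snd x, snd y)) ` ED"
  proof (clarify)
    fix c c' assume e: "(c, c') \<in> EC"
    then obtain b where "(b, c) \<in> VD" using ex_pair_over_snd graph_edge_in[OF C.is_graph e] by blast
    then obtain b' where "((b, c), (b', c')) \<in> ED" using e by (rule snd_lift_edge)
    then show "(c, c') \<in> (\<lambda>(x, y). (snd x, snd y)) ` ED"
      by (intro image_eqI[where x="((b, c), (b', c'))"]) simp_all
  qed
qed

lemma snd_epimorphism: "epimorphism VD ED rD VC EC rC snd"
proof (rule epimorphismI[OF snd_image _ snd_edge_image])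
  show "(snd x, snd y) \<in> EC" if "(x, y) \<in> ED" for x y using that by (auto simp: ED_def)
  show "snd rD = rC" by (simp add: rD_def)
  show "tree_le VC EC rC (snd x) (snd y)" if "x \<in> VD" "y \<in> VD" "tree_le VD ED rD x y" for x y
    using tree_le_preserved[where F=snd, OF parent_structure_D C.parent_structure_axioms snd_in _
        that(2,3)] snd_parent
    by blast
qed

lemma snd_confluent: "confluent VD ED VC EC snd"
proof (rule confluentI_edge_lifting)
  show "snd ` VD = VC" by (rule snd_image)
  fix v w assume v: "v \<in> VD" and e: "(snd v, w) \<in> EC"
  obtain b c where bc: "v = (b, c)" by (cases v)
  have "(b, c) \<in> VD" "(c, w) \<in> EC" using v e bc by simp_all
  then obtain b' where e': "((b, c), (b', w)) \<in> ED" by (rule snd_lift_edge)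
  have "((b', w), (b, c)) \<in> ED"
    by (rule graph_edge_sym[OF parent_structure.is_graph[OF parent_structure_D] e'])
  then have "connected_set ED {(b, c), (b', w)}" by (rule connected_set_edge[OF e'])
  moreover have "{(b, c), (b', w)} \<subseteq> VD" using e' by simp
  ultimately show "\<exists>L. L \<subseteq> VD \<and> connected_set ED L \<and> v \<in> L \<and> snd ` L \<subseteq> {snd v, w} \<and> w \<in> snd ` L"
    using bc by (intro exI[of _ "{(b, c), (b', w)}"]) simp
qed

text \<open>A child \<open>c1\<close> of \<open>c\<close> would give, by lifting the edge from \<open>g c\<close> to \<open>g c1\<close> along \<open>f\<close>,
  a child of \<open>(b, c)\<close>.\<close>

lemma end_vertex_snd:
  assumes "end_vertex VD ED rD (b, c)"
  shows "end_vertex VC EC rC c"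
proof -
  interpret D: parent_structure VD ED rD pD hD by (rule parent_structure_D)
  have v: "(b, c) \<in> VD" "(b, c) \<noteq> rD" and no_child: "\<forall>x\<in>VD. x \<noteq> rD \<longrightarrow> pD x \<noteq> (b, c)"
    using assms unfolding D.end_vertex_iff by simp_all
  have "pC c1 \<noteq> c" if c1: "c1 \<in> VC" "c1 \<noteq> rC" for c1
  proof
    assume c: "pC c1 = c"
    have "(c, c1) \<in> EC" using C.parent_edge[OF c1] c graph_edge_sym[OF C.is_graph] by simp
    then obtain b1 where e: "((b, c), (b1, c1)) \<in> ED" by (rule snd_lift_edge[OF v(1)])
    then have "(b1, c1) \<in> VD" "(b, pC c1) \<in> VD" "(b1, b) \<in> EB"
      using c graph_edge_sym[OF B.is_graph] by auto
    then have "pD (b1, c1) = (b, c)" using edge_over_parent c1(2) c by metis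
    moreover have "(b1, c1) \<noteq> rD" using c1(2) by (simp add: rD_def)
    ultimately show False using no_child \<open>(b1, c1) \<in> VD\<close> by blast
  qed
  then show ?thesis unfolding C.end_vertex_iff using v snd_neq_root[OF v] by simp
qed

lemma end_vertex_fst:
  assumes g_evp: "end_vertex_preserving VC EC rC VA EA rA g" and ev: "end_vertex VD ED rD (b, c)"
  shows "end_vertex VB EB rB b"
proof -
  have v: "b \<in> VB" "c \<in> VC" "f b = g c" using ev by (auto simp: end_vertex_def)
  have "end_vertex VA EA rA (g c)"
    using g_evp end_vertex_snd[OF ev] unfolding end_vertex_preserving_def by blast
  then have gc: "g c \<noteq> rA" "\<forall>a\<in>VA. a \<noteq> rA \<longrightarrow> pA a \<noteq> g c" unfolding A.end_vertex_iff by simp_all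
  have "b \<noteq> rB" using gc(1) v(3) f_root by auto
  moreover have "pB b1 \<noteq> b" if "b1 \<in> VB" "b1 \<noteq> rB" for b1
    using f_parent[OF that] gc(2) f_in[OF that(1)] v(3) by auto
  ultimately show ?thesis unfolding B.end_vertex_iff using v(1) by simp
qed

lemma snd_end_vertex_preserving: "end_vertex_preserving VD ED rD VC EC rC snd"
  unfolding end_vertex_preserving_def split_paired_All using end_vertex_snd by simp

lemma fst_end_vertex_preserving:
  assumes "end_vertex_preserving VC EC rC VA EA rA g"
  shows "end_vertex_preserving VD ED rD VB EB rB fst"
  unfolding end_vertex_preserving_def split_paired_All using end_vertex_fst[OF assms] by simp

end

theorem theorem5p16:
  fixes VA :: "'a set" and EA :: "('a \<times> 'a) set" and rA :: 'a
    and VB :: "'b set" and EB :: "('b \<times> 'b) set" and rB :: 'b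
    and VC :: "'c set" and EC :: "('c \<times> 'c) set" and rC :: 'c
    and f :: "'b \<Rightarrow> 'a" and g :: "'c \<Rightarrow> 'a"
  assumes A: "rooted_tree VA EA rA"
    and B: "rooted_tree VB EB rB"
    and C: "rooted_tree VC EC rC"
    and f_epi: "epimorphism VB EB rB VA EA rA f"
    and f_light: "light VB EB f"
    and f_conf: "confluent VB EB VA EA f"
    and g_epi: "epimorphism VC EC rC VA EA rA g"
    and g_conf: "confluent VC EC VA EA g"
  defines "VD \<equiv> {(b, c). b \<in> VB \<and> c \<in> VC \<and> f b = g c}"
    and "ED \<equiv> {((b, c), (b', c')). b \<in> VB \<and> c \<in> VC \<and> f b = g c \<and> b' \<in> VB \<and> c' \<in> VC \<and> f b' = g c'
         \<and> (b, b') \<in> EB \<and> (c, c') \<in> EC}"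
    and "rD \<equiv> (rB, rC)"
  shows "rooted_tree VD ED rD
    \<and> epimorphism VD ED rD VB EB rB fst \<and> confluent VD ED VB EB fst
    \<and> epimorphism VD ED rD VC EC rC snd \<and> light VD ED snd \<and> confluent VD ED VC EC snd
    \<and> (\<forall>x\<in>VD. f (fst x) = g (snd x))
    \<and> (light VC EC g \<longrightarrow> light VD ED fst)
    \<and> (end_vertex_preserving VB EB rB VA EA rA f \<and> end_vertex_preserving VC EC rC VA EA rA g
         \<longrightarrow> end_vertex_preserving VD ED rD VB EB rB fst \<and> end_vertex_preserving VD ED rD VC EC rC snd)"
proof -
  let ?pA = "tree_parent VA EA rA" and ?hA = "tree_depth VA EA rA"
  let ?pB = "tree_parent VB EB rB" and ?hB = "tree_depth VB EB rB"
  let ?pC = "tree_parent VC EC rC" and ?hC = "tree_depth VC EC rC"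
  interpret P: pullback_light_confluent VA EA rA ?pA ?hA VB EB rB ?pB ?hB VC EC rC ?pC ?hC f g
    by (intro pullback_light_confluent.intro pullback.intro pullback_axioms.intro
        pullback_light_confluent_axioms.intro rooted_tree_parent_structure A B C f_epi f_light g_epi f_conf)
  have D: "VD = P.VD" "ED = P.ED" "rD = P.rD"
    unfolding VD_def ED_def rD_def P.VD_def P.ED_def P.rD_def by simp_all
  have "\<forall>x\<in>P.VD. f (fst x) = g (snd x)" by (auto simp: P.VD_def)
  moreover have "light VC EC g \<longrightarrow> light P.VD P.ED fst" using P.fst_light by blast
  moreover have "end_vertex_preserving VB EB rB VA EA rA f \<and> end_vertex_preserving VC EC rC VA EA rA g
      \<longrightarrow> end_vertex_preserving P.VD P.ED P.rD VB EB rB fst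
        \<and> end_vertex_preserving P.VD P.ED P.rD VC EC rC snd"
    \<comment> \<open>only \<open>g\<close> has to preserve end vertices\<close>
    using P.fst_end_vertex_preserving P.snd_end_vertex_preserving by blast
  ultimately show ?thesis
    unfolding D
    using parent_structure.is_rooted_tree[OF P.parent_structure_D] P.fst_epimorphism
      P.fst_confluent[OF g_conf] P.snd_epimorphism P.snd_light P.snd_confluent
    by (intro conjI) assumption+
qed

end
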